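(* Let $X$ be a locally compact separable metric space which is not discrete, endowed with its Borel $\sigma$-algebra, let $V$ be a finite-dimensional real vector space and let $|\cdot|_V$ be a seminorm on $V$ which is not strictly convex. Then there exists a sequence $(\mu_n)_{n\in\mathbb{N}}$ of Borel vector measures from $X$ to $V$ converging widely to a Borel vector measure $\mu$ such that $|\mu_n|_V(X)\to|\mu|_V(X)$, but the sequence $(\mathcal{R}(\mu_n))_{n\in\mathbb{N}}$ is constant and different from $\mathcal{R}(\mu)$ (so in particular the ranges do not converge to $\mathcal{R}(\mu)$).
   Context: A seminorm $|\cdot|_V$ is strictly convex if for all linearly independent $v,w\in V$, $|v+w|_V<|v|_V+|w|_V$. A vector measure is a countably additive map $\mu:\Sigma\to V$. The total variation is $|\mu|_V(A)=\sup\{\sum_{i=1}^m|\mu(E_i)|_V : E_1,\dots,E_m\in\Sigma \text{ pairwise disjoint subsets of } A\}$. The range is $\mathcal{R}(\mu)=\overline{\mathrm{conv}}\{\mu(E):E\in\Sigma\}$. Wide convergence of $\mu_n$ to $\mu$ means $\int_X\varphi\,d\mu_n\to\int_X\varphi\,d\mu$ for every $\varphi\in C_c(X,\mathbb{R})$. *)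

theory Defs
  imports "HOL-Analysis.Analysis"
begin

definition seminorm :: "('v::real_vector \<Rightarrow> real) \<Rightarrow> bool" where
  "seminorm p \<longleftrightarrow> (\<forall>x y. p (x + y) \<le> p x + p y) \<and> (\<forall>c x. p (c *\<^sub>R x) = \<bar>c\<bar> * p x)"

definition strictly_convex_seminorm :: "('v::real_vector \<Rightarrow> real) \<Rightarrow> bool" where
  "strictly_convex_seminorm p \<longleftrightarrow>
     (\<forall>v w. v \<noteq> w \<and> independent {v, w} \<longrightarrow> p (v + w) < p v + p w)"

definition vector_measure :: "'a measure \<Rightarrow> ('a set \<Rightarrow> 'v::real_normed_vector) \<Rightarrow> bool" where
  "vector_measure M \<mu> \<longleftrightarrow>
     \<mu> {} = 0 \<and>
     (\<forall>A::nat \<Rightarrow> 'a set. range A \<subseteq> sets M \<and> disjoint_family A \<longrightarrow>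
        (\<lambda>n. \<mu> (A n)) sums \<mu> (\<Union>n. A n))"

definition total_variation ::
  "'a measure \<Rightarrow> ('v \<Rightarrow> real) \<Rightarrow> ('a set \<Rightarrow> 'v) \<Rightarrow> 'a set \<Rightarrow> ennreal" where
  "total_variation M p \<mu> A =
     (SUP F \<in> {F. finite F \<and> F \<subseteq> sets M \<and> (\<forall>E\<in>F. E \<subseteq> A) \<and> disjoint F}.
        ennreal (\<Sum>E\<in>F. p (\<mu> E)))"

definition vm_range :: "'a measure \<Rightarrow> ('a set \<Rightarrow> 'v::real_normed_vector) \<Rightarrow> 'v set" where
  "vm_range M \<mu> = closure (convex hull (\<mu> ` sets M))"

text \<open>Integral of a bounded real function against a vector measure, defined as the limit of
  the sums \<open>\<Sum> c_E \<mu>(E)\<close> over finite measurable partitions on whose cells \<open>\<phi>\<close> is uniformly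
  approximated by the constants \<open>c_E\<close> (i.e. integrals of uniformly approximating simple functions).\<close>
definition vm_integral :: "'a measure \<Rightarrow> ('a set \<Rightarrow> 'v::real_normed_vector) \<Rightarrow> ('a \<Rightarrow> real) \<Rightarrow> 'v" where
  "vm_integral M \<mu> \<phi> =
     (THE I. \<forall>e>0. \<exists>d>0. \<forall>P c. finite P \<and> P \<subseteq> sets M \<and> disjoint P \<and> \<Union>P = space M \<and>
        (\<forall>E\<in>P. \<forall>x\<in>E. \<bar>\<phi> x - c E\<bar> \<le> d) \<longrightarrow> norm ((\<Sum>E\<in>P. c E *\<^sub>R \<mu> E) - I) \<le> e)"

definition Cc :: "('a::topological_space \<Rightarrow> real) set" where
  "Cc = {\<phi>. continuous_on UNIV \<phi> \<and> compact (closure {x. \<phi> x \<noteq> 0})}"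

definition wide_conv ::
  "'a::topological_space measure \<Rightarrow> (nat \<Rightarrow> 'a set \<Rightarrow> 'v::real_normed_vector) \<Rightarrow> ('a set \<Rightarrow> 'v) \<Rightarrow> bool" where
  "wide_conv M \<mu>s \<mu> \<longleftrightarrow>
     (\<forall>\<phi>\<in>Cc. (\<lambda>n. vm_integral M (\<mu>s n) \<phi>) \<longlonglongrightarrow> vm_integral M \<mu> \<phi>)"

end

theory Submission
  imports Defs
begin

text \<open>
  Failure of strict convexity yields linearly independent \<open>v\<close>, \<open>w\<close> with \<open>p (v + w) = p v + p w\<close>.
  Choose a non-isolated point \<open>x\<^sub>0\<close> and points \<open>x\<^sub>n \<noteq> x\<^sub>0\<close> converging to it. The measures
  \<open>\<delta>\<^bsub>x\<^sub>n\<^esub> v + \<delta>\<^bsub>x\<^sub>0\<^esub> w\<close> converge widely to \<open>\<delta>\<^bsub>x\<^sub>0\<^esub> (v + w)\<close>, and all of them have total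
  variation \<open>p v + p w\<close>. Each \<open>\<mu>\<^sub>n\<close> takes the values \<open>0, v, w, v + w\<close>, so its range is one fixed
  parallelogram, whereas the range of the limit is the segment \<open>[0, v + w]\<close>, which misses \<open>v\<close>.
\<close>

lemma seminorm_zero: "seminorm p \<Longrightarrow> p 0 = 0"
  unfolding seminorm_def by (metis abs_zero mult_zero_left scaleR_zero_left)

lemma seminorm_nonneg:
  assumes "seminorm p" shows "0 \<le> p x"
proof -
  have "p (- x) = p x"
    using assms unfolding seminorm_def by (metis abs_minus_cancel abs_one mult_1 scaleR_minus1_left)
  moreover have "p 0 \<le> p x + p (- x)"
    using assms unfolding seminorm_def by (metis add.right_inverse)
  ultimately show ?thesis using seminorm_zero[OF assms] by simp
qed

lemma sum_disjoint_supported_at_point: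
  assumes "finite F" "disjoint F" "\<And>E. E \<in> F \<Longrightarrow> y \<notin> E \<Longrightarrow> g E = 0" "E \<in> F" "y \<in> E"
  shows "sum g F = g E"
proof -
  have "g E' = 0" if "E' \<in> F - {E}" for E'
    using that assms(2-5) unfolding pairwise_def disjnt_def by blast
  thus ?thesis using assms(1,4) by (simp add: sum.remove)
qed

lemma independent_imp_notin_segment:
  fixes v w :: "'v::real_vector"
  assumes "v \<noteq> w" "independent {v, w}"
  shows "v \<notin> closed_segment 0 (v + w)"
proof
  assume "v \<in> closed_segment 0 (v + w)"
  then obtain u where u: "v = u *\<^sub>R (v + w)" unfolding in_segment by auto
  have "v \<noteq> 0" using assms(2) dependent_zero by blast
  hence "u \<noteq> 0" using u by auto
  have "u *\<^sub>R w = (1 - u) *\<^sub>R v"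
    using u by (simp add: algebra_simps)
  hence "w = inverse u *\<^sub>R ((1 - u) *\<^sub>R v)"
    using \<open>u \<noteq> 0\<close> by (metis scaleR_scaleR left_inverse scaleR_one)
  hence "w \<in> span ({v, w} - {w})" using assms(1) by (simp add: insert_Diff_if span_base span_scale)
  hence "dependent {v, w}" unfolding dependent_def by blast
  with assms(2) show False by blast
qed

lemma not_strictly_convex_seminormE:
  assumes "seminorm p" "\<not> strictly_convex_seminorm p"
  obtains v w where "v \<noteq> w" "independent {v, w}" "p (v + w) = p v + p w"
proof -
  obtain v w where "v \<noteq> w" "independent {v, w}" "\<not> p (v + w) < p v + p w"
    using assms(2) unfolding strictly_convex_seminorm_def by blast
  moreover have "p (v + w) \<le> p v + p w" using assms(1) unfolding seminorm_def by blast
  ultimately show thesis by (intro that) auto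
qed

definition vm_dirac :: "'a \<Rightarrow> 'v::real_normed_vector \<Rightarrow> 'a set \<Rightarrow> 'v" where
  "vm_dirac y a E = (if y \<in> E then a else 0)"

lemma vector_measure_vm_dirac: "vector_measure M (vm_dirac y a)"
  unfolding vector_measure_def
proof (intro conjI allI impI)
  show "vm_dirac y a {} = 0" by (simp add: vm_dirac_def)
  fix A :: "nat \<Rightarrow> 'a set" assume "range A \<subseteq> sets M \<and> disjoint_family A"
  hence disj: "disjoint_family A" by blast
  show "(\<lambda>n. vm_dirac y a (A n)) sums vm_dirac y a (\<Union>n. A n)"
  proof (cases "y \<in> (\<Union>n. A n)")
    case True
    then obtain m where "y \<in> A m" by blast
    hence "y \<in> A n \<longleftrightarrow> n = m" for n
      using disj unfolding disjoint_family_on_def by blast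
    thus ?thesis using True sums_single[of m "\<lambda>_. a"] by (simp add: vm_dirac_def)
  qed (simp add: vm_dirac_def)
qed

lemma vector_measure_add:
  assumes "vector_measure M \<mu>" "vector_measure M \<nu>"
  shows "vector_measure M (\<lambda>E. \<mu> E + \<nu> E)"
  using assms unfolding vector_measure_def by (auto intro: sums_add)

definition step_approx ::
  "'a measure \<Rightarrow> ('a \<Rightarrow> real) \<Rightarrow> real \<Rightarrow> 'a set set \<Rightarrow> ('a set \<Rightarrow> real) \<Rightarrow> bool" where
  "step_approx M \<phi> d P c \<longleftrightarrow> finite P \<and> P \<subseteq> sets M \<and> disjoint P \<and> \<Union>P = space M \<and>
     (\<forall>E\<in>P. \<forall>x\<in>E. \<bar>\<phi> x - c E\<bar> \<le> d)"

definition vm_has_integral ::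
  "'a measure \<Rightarrow> ('a set \<Rightarrow> 'v::real_normed_vector) \<Rightarrow> ('a \<Rightarrow> real) \<Rightarrow> 'v \<Rightarrow> bool" where
  "vm_has_integral M \<mu> \<phi> I \<longleftrightarrow>
     (\<forall>e>0. \<exists>d>0. \<forall>P c. step_approx M \<phi> d P c \<longrightarrow> norm ((\<Sum>E\<in>P. c E *\<^sub>R \<mu> E) - I) \<le> e)"

lemma vm_integral_eq_The: "vm_integral M \<mu> \<phi> = (THE I. vm_has_integral M \<mu> \<phi> I)"
  unfolding vm_integral_def vm_has_integral_def step_approx_def ..

lemma step_approx_mono: "step_approx M \<phi> d P c \<Longrightarrow> d \<le> d' \<Longrightarrow> step_approx M \<phi> d' P c"
  unfolding step_approx_def by (meson order_trans)

lemma step_approx_exists: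
  assumes meas: "\<phi> \<in> borel_measurable M" and bdd: "bounded (\<phi> ` space M)" and "d > 0"
  obtains P c where "step_approx M \<phi> d P c"
proof
  define k where "k x = \<lfloor>\<phi> x / d\<rfloor>" for x
  define cell where "cell j = {x \<in> space M. k x = j}" for j
  define P where "P = cell ` k ` space M"
  define c where "c E = \<phi> (SOME x. x \<in> E)" for E
  obtain B where B: "\<And>x. x \<in> space M \<Longrightarrow> \<bar>\<phi> x\<bar> \<le> B"
    using bdd unfolding bounded_iff by auto
  have "k ` space M \<subseteq> {\<lfloor>- B / d\<rfloor>..\<lfloor>B / d\<rfloor>}"
  proof
    fix j assume "j \<in> k ` space M"
    then obtain x where "x \<in> space M" "j = k x" by blast
    hence "- B \<le> \<phi> x" "\<phi> x \<le> B" using B[of x] by linarith+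
    hence "- B / d \<le> \<phi> x / d" "\<phi> x / d \<le> B / d"
      using \<open>d > 0\<close> by (intro divide_right_mono; simp)+
    thus "j \<in> {\<lfloor>- B / d\<rfloor>..\<lfloor>B / d\<rfloor>}" unfolding \<open>j = k x\<close> k_def by (simp add: floor_mono)
  qed
  hence "finite P" unfolding P_def by (meson finite_atLeastAtMost_int finite_imageI finite_subset)
  moreover have "P \<subseteq> sets M"
  proof -
    have "k \<in> M \<rightarrow>\<^sub>M count_space UNIV"
      unfolding k_def using meas
      by (intro measurable_compose[OF _ measurable_real_floor] borel_measurable_divide measurable_const) auto
    thus ?thesis unfolding P_def cell_def by (auto intro: measurable_sets_Collect[where P = "\<lambda>j. j = _"])
  qed
  moreover have "disjoint P" unfolding P_def cell_def disjoint_def by auto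
  moreover have "\<Union>P = space M" unfolding P_def cell_def by auto
  moreover have "\<bar>\<phi> x - c E\<bar> \<le> d" if "E \<in> P" "x \<in> E" for E x
  proof -
    have "(SOME x. x \<in> E) \<in> E" using \<open>x \<in> E\<close> by (rule someI)
    then obtain z where "z \<in> E" "c E = \<phi> z" unfolding c_def by blast
    hence "\<lfloor>\<phi> x / d\<rfloor> = \<lfloor>\<phi> z / d\<rfloor>" using that unfolding P_def cell_def k_def by auto
    hence "\<bar>\<phi> x / d - \<phi> z / d\<bar> < 1" by linarith
    hence "\<bar>\<phi> x - \<phi> z\<bar> < d" using \<open>d > 0\<close> by (simp add: diff_divide_distrib[symmetric])
    thus ?thesis using \<open>c E = \<phi> z\<close> by simp
  qed
  ultimately show "step_approx M \<phi> d P c" unfolding step_approx_def by blast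
qed

lemma vm_has_integral_unique:
  assumes meas: "\<phi> \<in> borel_measurable M" and bdd: "bounded (\<phi> ` space M)"
    and I: "vm_has_integral M \<mu> \<phi> I" and J: "vm_has_integral M \<mu> \<phi> J"
  shows "I = J"
proof (rule ccontr)
  assume "I \<noteq> J"
  define e where "e = norm (I - J) / 3"
  have "e > 0" unfolding e_def using \<open>I \<noteq> J\<close> by simp
  obtain d1 where "d1 > 0"
    and d1: "\<And>P c. step_approx M \<phi> d1 P c \<Longrightarrow> norm ((\<Sum>E\<in>P. c E *\<^sub>R \<mu> E) - I) \<le> e"
    using I \<open>e > 0\<close> unfolding vm_has_integral_def by blast
  obtain d2 where "d2 > 0"
    and d2: "\<And>P c. step_approx M \<phi> d2 P c \<Longrightarrow> norm ((\<Sum>E\<in>P. c E *\<^sub>R \<mu> E) - J) \<le> e"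
    using J \<open>e > 0\<close> unfolding vm_has_integral_def by blast
  have "min d1 d2 > 0" using \<open>d1 > 0\<close> \<open>d2 > 0\<close> by simp
  then obtain P c where Pc: "step_approx M \<phi> (min d1 d2) P c"
    by (rule step_approx_exists[OF meas bdd])
  define S where "S = (\<Sum>E\<in>P. c E *\<^sub>R \<mu> E)"
  have "norm (S - I) \<le> e" "norm (S - J) \<le> e"
    unfolding S_def using d1 d2 step_approx_mono[OF Pc] by simp_all
  hence "norm (I - J) \<le> 2 * e" using norm_triangle_ineq4[of "S - J" "S - I"] by simp
  thus False using \<open>e > 0\<close> unfolding e_def by simp
qed

lemma vm_integral_eqI:
  assumes "\<phi> \<in> borel_measurable M" "bounded (\<phi> ` space M)" "vm_has_integral M \<mu> \<phi> I"
  shows "vm_integral M \<mu> \<phi> = I"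
  unfolding vm_integral_eq_The using assms by (blast intro: vm_has_integral_unique)

lemma vm_has_integral_add:
  assumes I: "vm_has_integral M \<mu> \<phi> I" and J: "vm_has_integral M \<nu> \<phi> J"
  shows "vm_has_integral M (\<lambda>E. \<mu> E + \<nu> E) \<phi> (I + J)"
  unfolding vm_has_integral_def
proof (intro allI impI)
  fix e :: real assume "e > 0"
  hence "e / 2 > 0" by simp
  obtain d1 where "d1 > 0"
    and d1: "\<And>P c. step_approx M \<phi> d1 P c \<Longrightarrow> norm ((\<Sum>E\<in>P. c E *\<^sub>R \<mu> E) - I) \<le> e / 2"
    using I \<open>e / 2 > 0\<close> unfolding vm_has_integral_def by blast
  obtain d2 where "d2 > 0"
    and d2: "\<And>P c. step_approx M \<phi> d2 P c \<Longrightarrow> norm ((\<Sum>E\<in>P. c E *\<^sub>R \<nu> E) - J) \<le> e / 2"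
    using J \<open>e / 2 > 0\<close> unfolding vm_has_integral_def by blast
  show "\<exists>d>0. \<forall>P c. step_approx M \<phi> d P c \<longrightarrow>
          norm ((\<Sum>E\<in>P. c E *\<^sub>R (\<mu> E + \<nu> E)) - (I + J)) \<le> e"
  proof (intro exI[of _ "min d1 d2"] conjI allI impI)
    fix P c assume Pc: "step_approx M \<phi> (min d1 d2) P c"
    have "(\<Sum>E\<in>P. c E *\<^sub>R (\<mu> E + \<nu> E)) - (I + J)
        = ((\<Sum>E\<in>P. c E *\<^sub>R \<mu> E) - I) + ((\<Sum>E\<in>P. c E *\<^sub>R \<nu> E) - J)"
      by (simp add: scaleR_add_right sum.distrib)
    also have "norm \<dots> \<le> e / 2 + e / 2"
      using d1 d2 step_approx_mono[OF Pc] by (intro norm_triangle_le add_mono) simp_all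
    finally show "norm ((\<Sum>E\<in>P. c E *\<^sub>R (\<mu> E + \<nu> E)) - (I + J)) \<le> e" by simp
  qed (use \<open>d1 > 0\<close> \<open>d2 > 0\<close> in simp)
qed

lemma vm_has_integral_vm_dirac:
  assumes "y \<in> space M"
  shows "vm_has_integral M (vm_dirac y a) \<phi> (\<phi> y *\<^sub>R a)"
  unfolding vm_has_integral_def
proof (intro allI impI)
  fix e :: real assume "e > 0"
  define d where "d = e / (norm a + 1)"
  have "norm a + 1 > 0" using norm_ge_zero[of a] by linarith
  hence "d > 0" unfolding d_def using \<open>e > 0\<close> by simp
  show "\<exists>d>0. \<forall>P c. step_approx M \<phi> d P c \<longrightarrow>
          norm ((\<Sum>E\<in>P. c E *\<^sub>R vm_dirac y a E) - \<phi> y *\<^sub>R a) \<le> e"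
  proof (intro exI[of _ d] conjI allI impI \<open>d > 0\<close>)
    fix P c assume "step_approx M \<phi> d P c"
    hence P: "finite P" "disjoint P" "\<Union>P = space M" and c: "\<forall>E\<in>P. \<forall>x\<in>E. \<bar>\<phi> x - c E\<bar> \<le> d"
      unfolding step_approx_def by auto
    obtain E where E: "E \<in> P" "y \<in> E" using P(3) assms by blast
    have "(\<Sum>E\<in>P. c E *\<^sub>R vm_dirac y a E) = c E *\<^sub>R a"
      using sum_disjoint_supported_at_point[OF P(1,2) _ E, of "\<lambda>E. c E *\<^sub>R vm_dirac y a E"]
      by (simp add: vm_dirac_def E(2))
    hence "norm ((\<Sum>E\<in>P. c E *\<^sub>R vm_dirac y a E) - \<phi> y *\<^sub>R a) = \<bar>\<phi> y - c E\<bar> * norm a"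
      by (simp flip: scaleR_diff_left add: norm_minus_commute abs_minus_commute)
    also have "\<dots> \<le> d * (norm a + 1)"
      using c E \<open>d > 0\<close> by (intro mult_mono) auto
    also have "\<dots> = e" unfolding d_def using \<open>norm a + 1 > 0\<close> by simp
    finally show "norm ((\<Sum>E\<in>P. c E *\<^sub>R vm_dirac y a E) - \<phi> y *\<^sub>R a) \<le> e" .
  qed
qed

lemma Cc_bounded: "\<phi> \<in> Cc \<Longrightarrow> bounded (range \<phi>)"
proof -
  assume "\<phi> \<in> Cc"
  define K where "K = closure {x. \<phi> x \<noteq> 0}"
  have "compact K" "continuous_on K \<phi>"
    using \<open>\<phi> \<in> Cc\<close> unfolding Cc_def K_def by (auto intro: continuous_on_subset)
  hence "bounded (insert 0 (\<phi> ` K))" by (simp add: compact_continuous_image compact_imp_bounded)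
  moreover have "range \<phi> \<subseteq> insert 0 (\<phi> ` K)"
    unfolding K_def using closure_subset by fastforce
  ultimately show ?thesis by (rule bounded_subset)
qed

lemma Cc_borel_measurable: "\<phi> \<in> Cc \<Longrightarrow> \<phi> \<in> borel_measurable borel"
  unfolding Cc_def by (auto intro: borel_measurable_continuous_onI)

lemma vm_integral_Cc_eqI:
  assumes "\<phi> \<in> Cc" "vm_has_integral borel \<mu> \<phi> I"
  shows "vm_integral borel \<mu> \<phi> = I"
proof (rule vm_integral_eqI)
  show "\<phi> \<in> borel_measurable borel" using assms(1) by (rule Cc_borel_measurable)
  show "bounded (\<phi> ` space borel)" using Cc_bounded[OF assms(1)] by simp
qed (fact assms(2))

lemma wide_conv_two_vm_dirac:
  fixes x :: "'a::t2_space"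
  assumes "xs \<longlonglongrightarrow> x"
  shows "wide_conv borel (\<lambda>n E. vm_dirac (xs n) a E + vm_dirac x b E) (vm_dirac x (a + b))"
  unfolding wide_conv_def
proof
  fix \<phi> :: "'a \<Rightarrow> real" assume "\<phi> \<in> Cc"
  hence "isCont \<phi> x" unfolding Cc_def by (simp add: continuous_on_eq_continuous_at)
  hence "(\<lambda>n. \<phi> (xs n)) \<longlonglongrightarrow> \<phi> x" using assms by (rule isCont_tendsto_compose)
  hence "(\<lambda>n. \<phi> (xs n) *\<^sub>R a + \<phi> x *\<^sub>R b) \<longlonglongrightarrow> \<phi> x *\<^sub>R (a + b)"
    by (auto intro!: tendsto_eq_intros simp: scaleR_add_right)
  moreover have "vm_integral borel (\<lambda>E. vm_dirac (xs n) a E + vm_dirac x b E) \<phi>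
      = \<phi> (xs n) *\<^sub>R a + \<phi> x *\<^sub>R b" for n
    using \<open>\<phi> \<in> Cc\<close> by (intro vm_integral_Cc_eqI vm_has_integral_add vm_has_integral_vm_dirac) simp_all
  moreover have "vm_integral borel (vm_dirac x (a + b)) \<phi> = \<phi> x *\<^sub>R (a + b)"
    using \<open>\<phi> \<in> Cc\<close> by (intro vm_integral_Cc_eqI vm_has_integral_vm_dirac) simp_all
  ultimately show "(\<lambda>n. vm_integral borel (\<lambda>E. vm_dirac (xs n) a E + vm_dirac x b E) \<phi>)
      \<longlonglongrightarrow> vm_integral borel (vm_dirac x (a + b)) \<phi>" by simp
qed

lemma total_variation_ge:
  assumes "finite F" "F \<subseteq> sets M" "\<forall>E\<in>F. E \<subseteq> A" "disjoint F"
  shows "ennreal (\<Sum>E\<in>F. p (\<mu> E)) \<le> total_variation M p \<mu> A"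
  unfolding total_variation_def using assms by (intro SUP_upper) simp

lemma total_variation_le:
  assumes "\<And>F. finite F \<Longrightarrow> F \<subseteq> sets M \<Longrightarrow> \<forall>E\<in>F. E \<subseteq> A \<Longrightarrow> disjoint F \<Longrightarrow>
             (\<Sum>E\<in>F. p (\<mu> E)) \<le> C"
  shows "total_variation M p \<mu> A \<le> ennreal C"
  unfolding total_variation_def using assms by (intro SUP_least ennreal_leI) simp

lemma total_variation_add_le:
  assumes "seminorm p"
  shows "total_variation M p (\<lambda>E. \<mu> E + \<nu> E) A \<le> total_variation M p \<mu> A + total_variation M p \<nu> A"
  unfolding total_variation_def[of M p "\<lambda>E. \<mu> E + \<nu> E"]
proof (rule SUP_least)
  fix F assume "F \<in> {F. finite F \<and> F \<subseteq> sets M \<and> (\<forall>E\<in>F. E \<subseteq> A) \<and> disjoint F}"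
  hence F: "finite F" "F \<subseteq> sets M" "\<forall>E\<in>F. E \<subseteq> A" "disjoint F" by auto
  have "(\<Sum>E\<in>F. p (\<mu> E + \<nu> E)) \<le> (\<Sum>E\<in>F. p (\<mu> E) + p (\<nu> E))"
    using assms unfolding seminorm_def by (intro sum_mono) blast
  also have "\<dots> = (\<Sum>E\<in>F. p (\<mu> E)) + (\<Sum>E\<in>F. p (\<nu> E))" by (rule sum.distrib)
  finally have "ennreal (\<Sum>E\<in>F. p (\<mu> E + \<nu> E))
      \<le> ennreal ((\<Sum>E\<in>F. p (\<mu> E)) + (\<Sum>E\<in>F. p (\<nu> E)))"
    by (rule ennreal_leI)
  also have "\<dots> = ennreal (\<Sum>E\<in>F. p (\<mu> E)) + ennreal (\<Sum>E\<in>F. p (\<nu> E))"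
    using seminorm_nonneg[OF assms] by (intro ennreal_plus sum_nonneg)
  also have "\<dots> \<le> total_variation M p \<mu> A + total_variation M p \<nu> A"
    using F by (intro add_mono total_variation_ge)
  finally show "ennreal (\<Sum>E\<in>F. p (\<mu> E + \<nu> E)) \<le> total_variation M p \<mu> A + total_variation M p \<nu> A" .
qed

lemma total_variation_vm_dirac_le:
  fixes y :: 'a
  assumes "seminorm p"
  shows "total_variation M p (vm_dirac y a) A \<le> ennreal (p a)"
proof (rule total_variation_le)
  fix F :: "'a set set" assume "finite F" "disjoint F"
  show "(\<Sum>E\<in>F. p (vm_dirac y a E)) \<le> p a"
  proof (cases "y \<in> \<Union>F")
    case True
    then obtain E where "E \<in> F" "y \<in> E" by blast
    hence "(\<Sum>E\<in>F. p (vm_dirac y a E)) = p (vm_dirac y a E)"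
      using \<open>finite F\<close> \<open>disjoint F\<close>
      by (intro sum_disjoint_supported_at_point) (auto simp: vm_dirac_def seminorm_zero[OF assms])
    thus ?thesis using \<open>y \<in> E\<close> by (simp add: vm_dirac_def)
  next
    case False
    thus ?thesis by (auto simp: vm_dirac_def seminorm_zero[OF assms] seminorm_nonneg[OF assms])
  qed
qed

lemma total_variation_vm_dirac:
  assumes "seminorm p" "{y} \<in> sets M" "y \<in> A"
  shows "total_variation M p (vm_dirac y a) A = ennreal (p a)"
proof (rule antisym)
  show "total_variation M p (vm_dirac y a) A \<le> ennreal (p a)"
    using assms(1) by (rule total_variation_vm_dirac_le)
  show "ennreal (p a) \<le> total_variation M p (vm_dirac y a) A"
    using total_variation_ge[of "{{y}}" M A p "vm_dirac y a"] assms(2,3)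
    by (simp add: vm_dirac_def)
qed

lemma total_variation_two_vm_dirac:
  assumes "seminorm p" "y1 \<noteq> y2" "{y1} \<in> sets M" "{y2} \<in> sets M" "y1 \<in> A" "y2 \<in> A"
  shows "total_variation M p (\<lambda>E. vm_dirac y1 a1 E + vm_dirac y2 a2 E) A = ennreal (p a1 + p a2)"
proof (rule antisym)
  have "total_variation M p (\<lambda>E. vm_dirac y1 a1 E + vm_dirac y2 a2 E) A
      \<le> total_variation M p (vm_dirac y1 a1) A + total_variation M p (vm_dirac y2 a2) A"
    using assms(1) by (rule total_variation_add_le)
  also have "\<dots> \<le> ennreal (p a1) + ennreal (p a2)"
    using assms(1) by (intro add_mono total_variation_vm_dirac_le)
  finally show "total_variation M p (\<lambda>E. vm_dirac y1 a1 E + vm_dirac y2 a2 E) A \<le> ennreal (p a1 + p a2)"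
    using seminorm_nonneg[OF assms(1)] by simp
  have "disjoint {{y1}, {y2}}" using assms(2) by (auto simp: disjoint_def)
  thus "ennreal (p a1 + p a2) \<le> total_variation M p (\<lambda>E. vm_dirac y1 a1 E + vm_dirac y2 a2 E) A"
    using total_variation_ge[of "{{y1}, {y2}}" M A p "\<lambda>E. vm_dirac y1 a1 E + vm_dirac y2 a2 E"] assms(2-6)
    by (simp add: vm_dirac_def)
qed

lemma vm_range_vm_dirac:
  assumes "{y} \<in> sets M"
  shows "vm_range M (vm_dirac y a) = closed_segment 0 a"
proof -
  have "vm_dirac y a ` sets M \<subseteq> {0, a}" by (auto simp: vm_dirac_def)
  moreover have "0 \<in> vm_dirac y a ` sets M"
    by (rule rev_image_eqI[OF sets.empty_sets]) (simp add: vm_dirac_def)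
  moreover have "a \<in> vm_dirac y a ` sets M"
    by (rule rev_image_eqI[OF assms]) (simp add: vm_dirac_def)
  ultimately have "vm_dirac y a ` sets M = {0, a}" by blast
  thus ?thesis unfolding vm_range_def by (simp flip: segment_convex_hull)
qed

lemma vm_range_two_vm_dirac:
  assumes "y1 \<noteq> y2" "{y1} \<in> sets M" "{y2} \<in> sets M" "{y1, y2} \<in> sets M"
  shows "vm_range M (\<lambda>E. vm_dirac y1 a1 E + vm_dirac y2 a2 E) = convex hull {0, a1, a2, a1 + a2}"
proof -
  let ?\<mu> = "\<lambda>E. vm_dirac y1 a1 E + vm_dirac y2 a2 E"
  have "?\<mu> ` sets M \<subseteq> {0, a1, a2, a1 + a2}" by (auto simp: vm_dirac_def)
  moreover have "0 \<in> ?\<mu> ` sets M"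
    by (rule rev_image_eqI[OF sets.empty_sets]) (simp add: vm_dirac_def)
  moreover have "a1 \<in> ?\<mu> ` sets M"
    by (rule rev_image_eqI[OF assms(2)]) (use assms(1) in \<open>simp add: vm_dirac_def\<close>)
  moreover have "a2 \<in> ?\<mu> ` sets M"
    by (rule rev_image_eqI[OF assms(3)]) (use assms(1) in \<open>simp add: vm_dirac_def\<close>)
  moreover have "a1 + a2 \<in> ?\<mu> ` sets M"
    by (rule rev_image_eqI[OF assms(4)]) (simp add: vm_dirac_def)
  ultimately have "?\<mu> ` sets M = {0, a1, a2, a1 + a2}" by blast
  thus ?thesis unfolding vm_range_def by (simp add: compact_imp_closed finite_imp_compact_convex_hull)
qed

theorem proposition1p2:
  fixes p :: "'v::euclidean_space \<Rightarrow> real"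
  assumes "locally_compact_space (euclidean :: 'a::metric_space topology)"
    and "separable_space (euclidean :: 'a topology)"
    and "\<exists>x::'a. \<not> open {x}"
    and "seminorm p"
    and "\<not> strictly_convex_seminorm p"
  shows "\<exists>(\<mu>s :: nat \<Rightarrow> 'a set \<Rightarrow> 'v) \<mu>.
           (\<forall>n. vector_measure borel (\<mu>s n)) \<and> vector_measure borel \<mu> \<and>
           wide_conv borel \<mu>s \<mu> \<and>
           (\<lambda>n. total_variation borel p (\<mu>s n) UNIV) \<longlonglongrightarrow> total_variation borel p \<mu> UNIV \<and>
           (\<forall>n. vm_range borel (\<mu>s n) = vm_range borel (\<mu>s 0)) \<and>
           vm_range borel (\<mu>s 0) \<noteq> vm_range borel \<mu>"
proof -
  obtain v w where "v \<noteq> w" "independent {v, w}" and additive: "p (v + w) = p v + p w"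
    using not_strictly_convex_seminormE[OF assms(4,5)] by blast
  obtain x0 :: 'a where "\<not> open {x0}" using assms(3) by blast
  then obtain xs where xs: "\<And>n. xs n \<noteq> x0" "xs \<longlonglongrightarrow> x0"
    unfolding islimpt_UNIV_iff[symmetric] islimpt_sequential by blast
  define \<mu>s where "\<mu>s n = (\<lambda>E. vm_dirac (xs n) v E + vm_dirac x0 w E)" for n
  define \<mu> where "\<mu> = vm_dirac x0 (v + w)"
  have "wide_conv borel \<mu>s \<mu>"
    unfolding \<mu>s_def \<mu>_def using xs(2) by (rule wide_conv_two_vm_dirac)
  moreover have "vector_measure borel (\<mu>s n)" for n
    unfolding \<mu>s_def by (intro vector_measure_add vector_measure_vm_dirac)
  moreover have "vector_measure borel \<mu>" unfolding \<mu>_def by (rule vector_measure_vm_dirac)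
  moreover have "total_variation borel p (\<mu>s n) UNIV = total_variation borel p \<mu> UNIV" for n
    unfolding \<mu>s_def \<mu>_def using xs(1) additive
    by (simp add: total_variation_two_vm_dirac total_variation_vm_dirac assms(4) borel_closed)
  moreover have "vm_range borel (\<mu>s n) = convex hull {0, v, w, v + w}" for n
    unfolding \<mu>s_def using xs(1) by (simp add: vm_range_two_vm_dirac borel_closed)
  moreover have "v \<notin> vm_range borel \<mu>"
    unfolding \<mu>_def using independent_imp_notin_segment[OF \<open>v \<noteq> w\<close> \<open>independent {v, w}\<close>]
    by (simp add: vm_range_vm_dirac borel_closed)
  moreover have "v \<in> convex hull {0, v, w, v + w}" by (simp add: hull_inc)
  ultimately show ?thesis by (intro exI[of _ \<mu>s] exI[of _ \<mu>]) auto
qed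

end
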